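(* Let $F:\{0,1\}^n\to\mathbb{F}^E_m\cap[0,1]$ be a finite-precision CDF over a binary number format $\mathcal{B}=(n,\gamma_{\mathcal{B}},\phi_{\mathcal{B}})$. The expected number of fair random bits drawn by the procedure $\textsc{Opt}(F)$ described in the context is at most $m+2-2^{-2^{E-1}+3}$.
   Context: $\overline{\mathbb{R}}=\mathbb{R}\cup\{-\infty,+\infty,\bot\}$ is totally ordered by $-\infty<$ reals $<+\infty<\bot$. A binary number format $\mathcal{B}=(n,\gamma_{\mathcal{B}},\phi_{\mathcal{B}})$ consists of $n\ge1$, $\gamma_{\mathcal{B}}:\{0,1\}^n\to\overline{\mathbb{R}}$, and a bijection $\phi_{\mathcal{B}}$ of $\{0,1\}^n$ with $b<_{\mathrm{dict}}b'\Rightarrow\gamma_{\mathcal{B}}(\phi_{\mathcal{B}}(b))\le\gamma_{\mathcal{B}}(\phi_{\mathcal{B}}(b'))$; it induces the order $b<_{\mathcal{B}}b'$ iff $\phi_{\mathcal{B}}^{-1}(b)<_{\mathrm{dict}}\phi_{\mathcal{B}}^{-1}(b')$. $\mathbb{F}^E_m\cap[0,1]$ is the set of reals in $[0,1]$ representable as IEEE-754-style floating-point numbers with $E$ exponent and $m$ mantissa bits. A finite-precision CDF over $\mathcal{B}$ is $F:\{0,1\}^n\to\mathbb{F}^E_m\cap[0,1]$ with $F(\phi_{\mathcal{B}}(1^n))=1$ and $b<_{\mathcal{B}}b'\Rightarrow F(b)\le F(b')$. For $z\in[0,1]$ with concise binary expansion $(z_0.z_1z_2\ldots)_2$ write $[z]_j=z_j$.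 $\textsc{Opt}(F,b,\ell,f_0,f_1)$, called initially as $\textsc{Opt}(F,\varepsilon,0,0,1)$: if $|b|=n$ return $\phi_{\mathcal{B}}(b)$. Let $f_2=F(\phi_{\mathcal{B}}(b\,0\,1^{n-|b|-1}))$. If $f_2=f_1$ return $\textsc{Opt}(F,b0,\ell,f_0,f_2)$; if $f_2=f_0$ return $\textsc{Opt}(F,b1,\ell,f_2,f_1)$. Let $a_0(j)=[f_2-f_0]_j$, $a_1(j)=[f_1-f_2]_j$ (exact real differences). If $\ell>0$: if $a_0(\ell)=1,a_1(\ell)=0$ return $\textsc{Opt}(F,b0,\ell,f_0,f_2)$; if $a_0(\ell)=0,a_1(\ell)=1$ return $\textsc{Opt}(F,b1,\ell,f_2,f_1)$. Then repeat: draw a fair random bit $x$, set $\ell\leftarrow\ell+1$; if $x=0$ and $a_0(\ell)=1$ return $\textsc{Opt}(F,b0,\ell,f_0,f_2)$; if $x=1$ and $a_1(\ell)=1$ return $\textsc{Opt}(F,b1,\ell,f_2,f_1)$. *)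

theory Defs
  imports "HOL-Probability.Probability"
begin

datatype xreal = XNegInf | XFin real | XPosInf | XBot

fun xreal_le :: "xreal \<Rightarrow> xreal \<Rightarrow> bool" where
  "xreal_le XNegInf _ = True"
| "xreal_le (XFin x) XNegInf = False"
| "xreal_le (XFin x) (XFin y) = (x \<le> y)"
| "xreal_le (XFin x) _ = True"
| "xreal_le XPosInf XPosInf = True"
| "xreal_le XPosInf XBot = True"
| "xreal_le XPosInf _ = False"
| "xreal_le XBot y = (y = XBot)"

section \<open>Bit strings (False = 0, True = 1) and dictionary order\<close>

definition bitstrings :: "nat \<Rightarrow> bool list set" where
  "bitstrings n = {b. length b = n}"

definition dict_less :: "bool list \<Rightarrow> bool list \<Rightarrow> bool" where
  "dict_less b b' \<longleftrightarrow> length b = length b' \<and>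
     (\<exists>k < length b. take k b = take k b' \<and> \<not> b ! k \<and> b' ! k)"

definition binary_number_format ::
  "nat \<Rightarrow> (bool list \<Rightarrow> xreal) \<Rightarrow> (bool list \<Rightarrow> bool list) \<Rightarrow> bool" where
  "binary_number_format n \<gamma> \<phi> \<longleftrightarrow> n \<ge> 1 \<and>
     bij_betw \<phi> (bitstrings n) (bitstrings n) \<and>
     (\<forall>b \<in> bitstrings n. \<forall>b' \<in> bitstrings n.
        dict_less b b' \<longrightarrow> xreal_le (\<gamma> (\<phi> b)) (\<gamma> (\<phi> b')))"

definition fmt_less :: "nat \<Rightarrow> (bool list \<Rightarrow> bool list) \<Rightarrow> bool list \<Rightarrow> bool list \<Rightarrow> bool" where
  "fmt_less n \<phi> b b' \<longleftrightarrow>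
     dict_less (inv_into (bitstrings n) \<phi> b) (inv_into (bitstrings n) \<phi> b')"

section \<open>IEEE-754-style floating point numbers (nonnegative finite part)\<close>

definition fp_bias :: "nat \<Rightarrow> int" where
  "fp_bias E = 2 ^ (E - 1) - 1"

definition fp_nonneg :: "nat \<Rightarrow> nat \<Rightarrow> real set" where
  "fp_nonneg E m =
     {real f / 2 ^ m * 2 powr real_of_int (1 - fp_bias E) | f. f < 2 ^ m} \<union>
     {(1 + real f / 2 ^ m) * 2 powr real_of_int (int e - fp_bias E) | e f.
        1 \<le> e \<and> e \<le> 2 ^ E - 2 \<and> f < 2 ^ m}"

definition fp_unit :: "nat \<Rightarrow> nat \<Rightarrow> real set" where
  "fp_unit E m = fp_nonneg E m \<inter> {0..1}"

definition fp_cdf ::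
  "nat \<Rightarrow> nat \<Rightarrow> nat \<Rightarrow> (bool list \<Rightarrow> bool list) \<Rightarrow> (bool list \<Rightarrow> real) \<Rightarrow> bool" where
  "fp_cdf E m n \<phi> F \<longleftrightarrow>
     (\<forall>b \<in> bitstrings n. F b \<in> fp_unit E m) \<and>
     F (\<phi> (replicate n True)) = 1 \<and>
     (\<forall>b \<in> bitstrings n. \<forall>b' \<in> bitstrings n. fmt_less n \<phi> b b' \<longrightarrow> F b \<le> F b')"

text \<open>[z]_j for z in [0,1], concise expansion (no infinite tail of ones).\<close>
definition bin_digit :: "real \<Rightarrow> nat \<Rightarrow> bool" where
  "bin_digit z j = odd \<lfloor>z * 2 ^ j\<rfloor>"

text \<open>Given the coin stream \<omega> (the i-th drawn bit is \<omega> i, 0-indexed, True = 1),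
  the procedure is deterministic. The counter l equals the number of bits
  drawn so far, so the number of bits drawn is the final value of l
  (infinity if the procedure does not terminate). The parameter k = n - |b|.\<close>
fun opt_bits ::
  "(bool list \<Rightarrow> bool list) \<Rightarrow> (bool list \<Rightarrow> real) \<Rightarrow> (nat \<Rightarrow> bool) \<Rightarrow>
   nat \<Rightarrow> bool list \<Rightarrow> nat \<Rightarrow> real \<Rightarrow> real \<Rightarrow> enat" where
  "opt_bits \<phi> F \<omega> 0 b l f0 f1 = enat l"
| "opt_bits \<phi> F \<omega> (Suc k) b l f0 f1 =
    (let f2 = F (\<phi> (b @ [False] @ replicate k True));
         a0 = bin_digit (f2 - f0);
         a1 = bin_digit (f1 - f2);
         hit = (\<lambda>j. (\<not> \<omega> (j - 1) \<and> a0 j) \<or> (\<omega> (j - 1) \<and> a1 j))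
     in if f2 = f1 then opt_bits \<phi> F \<omega> k (b @ [False]) l f0 f2
        else if f2 = f0 then opt_bits \<phi> F \<omega> k (b @ [True]) l f2 f1
        else if l > 0 \<and> a0 l \<and> \<not> a1 l then opt_bits \<phi> F \<omega> k (b @ [False]) l f0 f2
        else if l > 0 \<and> \<not> a0 l \<and> a1 l then opt_bits \<phi> F \<omega> k (b @ [True]) l f2 f1
        else if (\<exists>j > l. hit j) then
          (let j = (LEAST j. l < j \<and> hit j) in
             if \<omega> (j - 1) then opt_bits \<phi> F \<omega> k (b @ [True]) j f2 f1
             else opt_bits \<phi> F \<omega> k (b @ [False]) j f0 f2)
        else \<infinity>)"

definition coins :: "(nat \<Rightarrow> bool) measure" where
  "coins = PiM UNIV (\<lambda>_. measure_pmf (bernoulli_pmf (1/2)))"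

definition expected_bits ::
  "nat \<Rightarrow> (bool list \<Rightarrow> bool list) \<Rightarrow> (bool list \<Rightarrow> real) \<Rightarrow> ennreal" where
  "expected_bits n \<phi> F =
     (\<integral>\<^sup>+ \<omega>. ennreal_of_enat (opt_bits \<phi> F \<omega> n [] 0 0 1) \<partial>coins)"

end

theory Submission
  imports Defs
begin

text \<open>All values of \<open>F\<close> are multiples of \<open>2 ^ (- T)\<close>, \<open>T = m + 2 ^ (E - 1) - 2\<close>, say
  \<open>F = G / 2 ^ T\<close> with integers \<open>G\<close> that have at most \<open>m\<close> binary digits after their
  leading one. Opt walks down the binary tree of output prefixes. At an inner node whose
  interval \<open>[v0, v1]\<close> is split at \<open>s\<close>, drawing coins amounts to adding the binary
  expansions of \<open>x = s - v0\<close> and \<open>y = v1 - s\<close>: coins are drawn while a carry propagates,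
  and Opt enters the child chosen at a digit where the expansion of that child is one.
  Counting coin prefixes, the probability that more than \<open>t\<close> coins are drawn is at most
  \<open>2 ^ (- t)\<close> times the number of nodes at which the addition carries into digit \<open>t\<close>.
  Each such carry uses up \<open>2 ^ (T - t)\<close> of interval length below \<open>2 ^ (m + T - t)\<close>, and
  above that bound all values are multiples of \<open>2 ^ (T - t)\<close>; so there are at most
  \<open>2 ^ m\<close> of them. Hence more than \<open>t\<close> coins are drawn with probability at most
  \<open>min 1 (2 ^ (m - t))\<close>, never more than \<open>T\<close> are drawn, and summing over \<open>t < T\<close> gives
  \<open>m + 2 - 2 ^ (m + 1 - T)\<close>.\<close>

section \<open>Binary digits and carries\<close>

text \<open>The \<open>j\<close>-th binary digit after the point of \<open>W / 2 ^ T\<close>; digit \<open>0\<close> is the units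
  digit.\<close>

definition digit :: "nat \<Rightarrow> nat \<Rightarrow> nat \<Rightarrow> bool" where
  "digit T W j \<longleftrightarrow> j \<le> T \<and> odd (W div 2 ^ (T - j))"

lemma bin_digit_dyadic: "bin_digit (real W / 2 ^ T) j = digit T W j"
proof (cases "j \<le> T")
  case True
  then have "(2::real) ^ T = 2 ^ (T - j) * 2 ^ j"
    by (simp flip: power_add)
  then have "real W / 2 ^ T * 2 ^ j = real W / real (2 ^ (T - j))"
    by simp
  then have "\<lfloor>real W / 2 ^ T * 2 ^ j\<rfloor> = int (W div 2 ^ (T - j))"
    by (simp only: floor_divide_of_nat_eq)
  then show ?thesis
    using True by (simp add: bin_digit_def digit_def)
next
  case False
  then have "(2::real) ^ j = 2 ^ T * 2 ^ (j - T)"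
    by (simp flip: power_add)
  then have "real W / 2 ^ T * 2 ^ j = real (W * 2 ^ (j - T))"
    by simp
  then have "\<lfloor>real W / 2 ^ T * 2 ^ j\<rfloor> = int (W * 2 ^ (j - T))"
    by (simp only: floor_of_nat)
  then show ?thesis
    using False by (simp add: bin_digit_def digit_def)
qed

lemma digit_pow2_self: "digit T (2 ^ T) l \<longleftrightarrow> l = 0"
proof (cases "l \<le> T")
  case True
  then have "(2::nat) ^ T = 2 ^ (T - l) * 2 ^ l"
    by (simp flip: power_add)
  then show ?thesis
    using True by (simp add: digit_def)
qed (auto simp: digit_def)

lemma bin_digit_dyadic_diff:
  "a \<le> b \<Longrightarrow> bin_digit (real b / 2 ^ T - real a / 2 ^ T) = digit T (b - a)"
  by (simp add: fun_eq_iff of_nat_diff diff_divide_distrib flip: bin_digit_dyadic)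

text \<open>The carry into digit \<open>i\<close> when adding \<open>x / 2 ^ T\<close> and \<open>y / 2 ^ T\<close>.\<close>

definition carry :: "nat \<Rightarrow> nat \<Rightarrow> nat \<Rightarrow> nat \<Rightarrow> bool" where
  "carry T x y i \<longleftrightarrow> 2 ^ (T - i) \<le> x mod 2 ^ (T - i) + y mod 2 ^ (T - i)"

lemma div_add_mod_mod:
  fixes x y M :: nat
  shows "(x mod M + y mod M) div M = of_bool (0 < M \<and> M \<le> x mod M + y mod M)"
proof (cases "0 < M \<and> M \<le> x mod M + y mod M")
  case True
  have "x mod M < M" "y mod M < M"
    using True by simp_all
  then have "x mod M + y mod M < M + M"
    by linarith
  then show ?thesis
    using True by (intro div_nat_eqI) simp_all
qed (auto simp: div_eq_0_iff)

lemma add_mod_mod: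
  fixes x y M :: nat
  shows "x mod M + y mod M = (x + y) mod M + M * of_bool (0 < M \<and> M \<le> x mod M + y mod M)"
  using div_mult_mod_eq[of "x mod M + y mod M" M] div_add_mod_mod[of x M y] mod_add_eq[of x M y]
  by (simp add: mult.commute)

lemma digit_add:
  assumes "i \<le> T"
  shows "digit T (x + y) i \<longleftrightarrow> digit T x i \<noteq> (digit T y i \<noteq> carry T x y i)"
proof -
  have "(x + y) div 2 ^ (T - i) = x div 2 ^ (T - i) + y div 2 ^ (T - i) + of_bool (carry T x y i)"
    using div_add1_eq[of x y "2 ^ (T - i)"] div_add_mod_mod[of x "2 ^ (T - i)" y]
    by (simp add: carry_def)
  then show ?thesis
    using assms by (cases "carry T x y i") (simp_all add: digit_def)
qed

lemma carry_Suc: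
  assumes "i < T"
  shows "carry T x y i \<longleftrightarrow>
    (if digit T x (Suc i) = digit T y (Suc i) then digit T x (Suc i) else carry T x y (Suc i))"
proof -
  obtain M :: nat where M: "2 ^ (T - Suc i) = M" "0 < M"
    by simp
  have "T - i = Suc (T - Suc i)"
    using assms by simp
  then have M2: "2 ^ (T - i) = 2 * M"
    using M by simp
  have mod_double: "z mod (2 * M) = z mod M + M * of_bool (digit T z (Suc i))" for z
    using assms mod_mult2_eq[of z M 2] M
    by (simp add: digit_def odd_iff_mod_2_eq_one mult.commute)
  obtain a b where "x mod M = a" "y mod M = b" "a < M" "b < M"
    using M by simp
  then show ?thesis
    unfolding carry_def M2 mod_double M(1)
    by (cases "digit T x (Suc i)"; cases "digit T y (Suc i)") simp_all
qed

lemma carry_chain: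
  assumes "carry T x y i"
  shows "\<exists>j>i. digit T x j \<and> digit T y j \<and>
    (\<forall>i'. i < i' \<and> i' < j \<longrightarrow> digit T x i' \<noteq> digit T y i' \<and> carry T x y i')"
  using assms
proof (induction "T - i" arbitrary: i)
  case 0
  then show ?case
    by (simp add: carry_def)
next
  case (Suc d)
  then have "i < T"
    by simp
  show ?case
  proof (cases "digit T x (Suc i) = digit T y (Suc i)")
    case True
    then show ?thesis
      using Suc.prems carry_Suc[OF \<open>i < T\<close>] by (intro exI[of _ "Suc i"]) auto
  next
    case False
    then have "carry T x y (Suc i)"
      using Suc.prems carry_Suc[OF \<open>i < T\<close>] by simp
    moreover have "d = T - Suc i"
      using Suc.hyps(2) by simp
    ultimately obtain j where "j > Suc i" "digit T x j" "digit T y j"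
      and between: "\<forall>i'. Suc i < i' \<and> i' < j \<longrightarrow> digit T x i' \<noteq> digit T y i' \<and> carry T x y i'"
      using Suc.hyps(1)[of "Suc i"] by blast
    have "digit T x i' \<noteq> digit T y i' \<and> carry T x y i'" if "i < i'" "i' < j" for i'
    proof -
      consider "i' = Suc i" | "Suc i < i'"
        using \<open>i < i'\<close> by linarith
      then show ?thesis
        using False \<open>carry T x y (Suc i)\<close> between \<open>i' < j\<close> by cases auto
    qed
    then show ?thesis
      using \<open>j > Suc i\<close> \<open>digit T x j\<close> \<open>digit T y j\<close> by (intro exI[of _ j]) auto
  qed
qed

text \<open>A carry into digit \<open>i\<close> is generated at the first less significant digit where both
  summands have a one, and propagates through the digits in between.\<close>

definition carry_origin :: "nat \<Rightarrow> nat \<Rightarrow> nat \<Rightarrow> nat \<Rightarrow> nat" where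
  "carry_origin T x y i = (LEAST j. i < j \<and> digit T x j \<and> digit T y j)"

lemma carry_origin:
  assumes "carry T x y i"
  shows "i < carry_origin T x y i" and "carry_origin T x y i \<le> T"
    and "digit T x (carry_origin T x y i)" and "digit T y (carry_origin T x y i)"
    and "\<And>i'. i < i' \<Longrightarrow> i' < carry_origin T x y i \<Longrightarrow>
      digit T x i' \<noteq> digit T y i' \<and> carry T x y i'"
proof -
  obtain j where j: "j > i" "digit T x j" "digit T y j"
    and between: "\<forall>i'. i < i' \<and> i' < j \<longrightarrow> digit T x i' \<noteq> digit T y i' \<and> carry T x y i'"
    using carry_chain[OF assms] by blast
  have "carry_origin T x y i = j"
    unfolding carry_origin_def
  proof (rule Least_equality)
    show "\<And>j'. i < j' \<and> digit T x j' \<and> digit T y j' \<Longrightarrow> j \<le> j'"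
      using between by (meson not_le)
  qed (use j in auto)
  then show "i < carry_origin T x y i" "carry_origin T x y i \<le> T"
    "digit T x (carry_origin T x y i)" "digit T y (carry_origin T x y i)"
    "\<And>i'. i < i' \<Longrightarrow> i' < carry_origin T x y i \<Longrightarrow> digit T x i' \<noteq> digit T y i' \<and> carry T x y i'"
    using j between by (auto simp: digit_def)
qed

lemma digit_add_before_carry_origin:
  assumes "carry T x y i" "i < i'" "i' < carry_origin T x y i"
  shows "\<not> digit T (x + y) i'"
  using carry_origin[OF assms(1)] assms(2,3) digit_add[of i' T x y] by auto

lemma carry_if_digit_add:
  assumes "x < 2 ^ T" "y < 2 ^ T" "digit T (x + y) i" "0 < i \<longrightarrow> digit T x i = digit T y i"
  shows "carry T x y i"
proof -
  have "i \<le> T"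
    using assms(3) by (simp add: digit_def)
  moreover have "digit T x i = digit T y i"
    using assms by (cases "i = 0") (auto simp: digit_def)
  ultimately show ?thesis
    using assms(3) digit_add by blast
qed

text \<open>The moves of Opt from an inner node whose children have the digit streams \<open>x\<close>
  and \<open>y\<close>, entered after \<open>l\<close> drawn bits: the child taken and the number of bits drawn on
  entering it, as far as it is at most \<open>t\<close>.\<close>

definition next_nodes :: "nat \<Rightarrow> nat \<Rightarrow> nat \<Rightarrow> nat \<Rightarrow> nat \<Rightarrow> (bool \<times> nat) set" where
  "next_nodes T t x y l =
     (if 0 < l \<and> digit T x l \<noteq> digit T y l then {(digit T y l, l)}
      else {(c, j). l < j \<and> j \<le> t \<and> j \<le> carry_origin T x y l \<and> digit T (if c then y else x) j})"

lemma next_nodes_subset: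
  assumes "l \<le> t"
  shows "next_nodes T t x y l \<subseteq> {(c, j). j \<le> t \<and> digit T (if c then y else x) j}"
  using assms by (auto simp: next_nodes_def)

lemma next_nodes_disjoint:
  assumes "x < 2 ^ T" "y < 2 ^ T" "digit T (x + y) l" "digit T (x + y) l'" "l < l'"
  shows "next_nodes T t x y l \<inter> next_nodes T t x y l' = {}"
proof (rule ccontr)
  assume "next_nodes T t x y l \<inter> next_nodes T t x y l' \<noteq> {}"
  then obtain c j where cj: "(c, j) \<in> next_nodes T t x y l" "(c, j) \<in> next_nodes T t x y l'"
    by auto
  have "l' \<le> j"
    using cj(2) by (auto simp: next_nodes_def split: if_splits)
  then have undecided: "\<not> (0 < l \<and> digit T x l \<noteq> digit T y l)"
    using cj(1) \<open>l < l'\<close> by (auto simp: next_nodes_def split: if_splits)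
  then have "carry T x y l"
    using assms(1-3) carry_if_digit_add by blast
  moreover have "j \<le> carry_origin T x y l"
    using cj(1) undecided by (auto simp: next_nodes_def split: if_splits)
  moreover have "\<not> l' < carry_origin T x y l"
    using digit_add_before_carry_origin[OF \<open>carry T x y l\<close> \<open>l < l'\<close>] assms(4) by blast
  ultimately have "l' = carry_origin T x y l"
    using \<open>l' \<le> j\<close> by linarith
  then have "digit T x l' \<and> digit T y l'"
    using carry_origin(3,4)[OF \<open>carry T x y l\<close>] by simp
  then have "l' < j"
    using cj(2) by (auto simp: next_nodes_def split: if_splits)
  then show False
    using \<open>l' = carry_origin T x y l\<close> \<open>j \<le> carry_origin T x y l\<close> by linarith
qed

lemma card_pending_carries:
  assumes "x < 2 ^ T" "y < 2 ^ T"
  shows "card {l. l \<le> t \<and> digit T (x + y) l \<and> \<not> (0 < l \<and> digit T x l \<noteq> digit T y l)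
      \<and> t < carry_origin T x y l} \<le> of_bool (carry T x y t)"
    (is "card ?W \<le> _")
proof -
  have carry: "carry T x y l" if "l \<in> ?W" for l
    using that assms carry_if_digit_add by blast
  have pending: "carry T x y t" if "l \<in> ?W" for l
  proof (cases "l = t")
    case False
    then show ?thesis
      using that carry_origin(5)[OF carry[OF that], of t] by auto
  qed (use carry that in simp)
  have "l = l'" if "l \<in> ?W" "l' \<in> ?W" for l l'
  proof -
    have False if "l \<in> ?W" "l' \<in> ?W" "l < l'" for l l'
      using digit_add_before_carry_origin[OF carry[OF that(1)] that(3)] that(1,2) by auto
    then show ?thesis
      using that by (meson linorder_neqE_nat)
  qed
  moreover have "finite ?W"
    by (rule finite_subset[of _ "{..t}"]) auto
  ultimately have "card ?W \<le> 1"
    by (simp add: card_le_Suc0_iff_eq)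
  then show ?thesis
    using pending by (cases "?W = {}") auto
qed

lemma sum_next_nodes_le:
  fixes h :: "bool \<times> nat \<Rightarrow> nat"
  assumes "x < 2 ^ T" "y < 2 ^ T"
  shows "(\<Sum>l | l \<le> t \<and> digit T (x + y) l. \<Sum>p\<in>next_nodes T t x y l. h p)
    \<le> (\<Sum>j | j \<le> t \<and> digit T x j. h (False, j)) + (\<Sum>j | j \<le> t \<and> digit T y j. h (True, j))"
proof -
  define V where "V = {l. l \<le> t \<and> digit T (x + y) l}"
  define D where "D c = {j. j \<le> t \<and> digit T (if c then y else x) j}" for c
  have "finite V"
    by (rule finite_subset[of _ "{..t}"]) (auto simp: V_def)
  have "finite (D c)" for c
    by (rule finite_subset[of _ "{..t}"]) (auto simp: D_def)
  then have "finite (Sigma UNIV D)"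
    by (simp add: finite_SigmaI)
  have sub: "next_nodes T t x y l \<subseteq> Sigma UNIV D" if "l \<in> V" for l
    using next_nodes_subset[of l t T x y] that by (auto simp: V_def D_def)
  have "(\<Sum>l\<in>V. \<Sum>p\<in>next_nodes T t x y l. h p) = (\<Sum>p\<in>(\<Union>l\<in>V. next_nodes T t x y l). h p)"
  proof (rule sum.UNION_disjoint[symmetric])
    show "\<forall>l\<in>V. finite (next_nodes T t x y l)"
      using sub finite_subset[OF _ \<open>finite (Sigma UNIV D)\<close>] by blast
    show "\<forall>l\<in>V. \<forall>l'\<in>V. l \<noteq> l' \<longrightarrow> next_nodes T t x y l \<inter> next_nodes T t x y l' = {}"
      using next_nodes_disjoint[OF assms] unfolding V_def by (metis Int_commute linorder_neqE_nat mem_Collect_eq)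
  qed (rule \<open>finite V\<close>)
  also have "\<dots> \<le> (\<Sum>p\<in>Sigma UNIV D. h p)"
    using sub \<open>finite (Sigma UNIV D)\<close> by (intro sum_mono2) auto
  also have "\<dots> = (\<Sum>c\<in>UNIV. \<Sum>j\<in>D c. h (c, j))"
    using sum.Sigma[of UNIV D "\<lambda>c j. h (c, j)"] \<open>\<And>c. finite (D c)\<close> by simp
  finally show ?thesis
    by (simp add: V_def D_def UNIV_bool)
qed

section \<open>The procedure Opt\<close>

definition coin_hit :: "(nat \<Rightarrow> bool) \<Rightarrow> (nat \<Rightarrow> bool) \<Rightarrow> (nat \<Rightarrow> bool) \<Rightarrow> nat \<Rightarrow> bool" where
  "coin_hit \<omega> a0 a1 j \<longleftrightarrow> (\<not> \<omega> (j - 1) \<and> a0 j) \<or> (\<omega> (j - 1) \<and> a1 j)"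

lemma opt_bits_Suc:
  "opt_bits \<phi> F \<omega> (Suc k) b l f0 f1 =
    (let f2 = F (\<phi> (b @ [False] @ replicate k True));
         a0 = bin_digit (f2 - f0);
         a1 = bin_digit (f1 - f2)
     in if f2 = f1 then opt_bits \<phi> F \<omega> k (b @ [False]) l f0 f2
        else if f2 = f0 then opt_bits \<phi> F \<omega> k (b @ [True]) l f2 f1
        else if l > 0 \<and> a0 l \<and> \<not> a1 l then opt_bits \<phi> F \<omega> k (b @ [False]) l f0 f2
        else if l > 0 \<and> \<not> a0 l \<and> a1 l then opt_bits \<phi> F \<omega> k (b @ [True]) l f2 f1
        else if \<exists>j > l. coin_hit \<omega> a0 a1 j then
          (let j = LEAST j. l < j \<and> coin_hit \<omega> a0 a1 j in
             if \<omega> (j - 1) then opt_bits \<phi> F \<omega> k (b @ [True]) j f2 f1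
             else opt_bits \<phi> F \<omega> k (b @ [False]) j f0 f2)
        else \<infinity>)"
  unfolding coin_hit_def by (simp only: opt_bits.simps Let_def)

lemma opt_bits_ge: "enat l \<le> opt_bits \<phi> F \<omega> k b l f0 f1"
proof (induction k arbitrary: b l f0 f1)
  case (Suc k)
  define f2 where "f2 = F (\<phi> (b @ [False] @ replicate k True))"
  define J where "J = (LEAST j. l < j \<and> coin_hit \<omega> (bin_digit (f2 - f0)) (bin_digit (f1 - f2)) j)"
  have J: "l \<le> J" if "\<exists>j>l. coin_hit \<omega> (bin_digit (f2 - f0)) (bin_digit (f1 - f2)) j"
    using LeastI_ex[OF that] unfolding J_def by auto
  have IH: "enat l \<le> opt_bits \<phi> F \<omega> k b' j g0 g1" if "l \<le> j" for b' j g0 g1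
    using that Suc.IH by (meson enat_ord_simps(1) order.trans)
  show ?case
    unfolding opt_bits_Suc[of \<phi> F \<omega> k b l f0 f1] Let_def f2_def[symmetric] J_def[symmetric]
    by (simp only: if_split, intro conjI impI) (simp_all add: IH J)
qed simp

lemma Least_coin_hit_cong:
  assumes "l < J" "coin_hit \<omega> a0 a1 J" "\<And>i. l < i \<Longrightarrow> i < J \<Longrightarrow> \<not> coin_hit \<omega> a0 a1 i"
    and agree: "\<And>i. l \<le> i \<Longrightarrow> i < J \<Longrightarrow> \<omega>' i = \<omega> i"
  shows "coin_hit \<omega>' a0 a1 J" and "(LEAST j. l < j \<and> coin_hit \<omega>' a0 a1 j) = J"
proof -
  have same: "coin_hit \<omega>' a0 a1 i \<longleftrightarrow> coin_hit \<omega> a0 a1 i" if "l < i" "i \<le> J" for i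
    using that agree[of "i - 1"] by (simp add: coin_hit_def)
  then show "coin_hit \<omega>' a0 a1 J"
    using assms(1,2) by simp
  show "(LEAST j. l < j \<and> coin_hit \<omega>' a0 a1 j) = J"
  proof (rule Least_equality)
    show "l < J \<and> coin_hit \<omega>' a0 a1 J"
      using assms(1,2) same by simp
    show "J \<le> j" if "l < j \<and> coin_hit \<omega>' a0 a1 j" for j
      using that assms(3) same[of j] by (meson less_imp_le not_le)
  qed
qed

lemma opt_bits_stopping_time:
  assumes "opt_bits \<phi> F \<omega> k b l f0 f1 = enat N" "\<And>i. l \<le> i \<Longrightarrow> i < N \<Longrightarrow> \<omega>' i = \<omega> i"
  shows "opt_bits \<phi> F \<omega>' k b l f0 f1 = enat N"
  using assms
proof (induction k arbitrary: b l f0 f1)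
  case (Suc k)
  define f2 where "f2 = F (\<phi> (b @ [False] @ replicate k True))"
  define a0 where "a0 = bin_digit (f2 - f0)"
  define a1 where "a1 = bin_digit (f1 - f2)"
  note unfold = opt_bits_Suc[of \<phi> F _ k b l f0 f1, unfolded Let_def,
      folded f2_def, folded a0_def a1_def]
  show ?case
  proof (cases "f2 = f1 \<or> f2 = f0 \<or> (0 < l \<and> a0 l \<noteq> a1 l)")
    case True
    then show ?thesis
      using Suc.prems Suc.IH unfolding unfold by (auto split: if_splits)
  next
    case False
    define J where "J = (LEAST j. l < j \<and> coin_hit \<omega> a0 a1 j)"
    have coin: "opt_bits \<phi> F \<omega> (Suc k) b l f0 f1 =
        (if \<exists>j>l. coin_hit \<omega> a0 a1 j then
          (if \<omega> (J - 1) then opt_bits \<phi> F \<omega> k (b @ [True]) J f2 f1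
           else opt_bits \<phi> F \<omega> k (b @ [False]) J f0 f2) else \<infinity>)"
      and coin': "opt_bits \<phi> F \<omega>' (Suc k) b l f0 f1 =
        (if \<exists>j>l. coin_hit \<omega>' a0 a1 j then
          (let J' = LEAST j. l < j \<and> coin_hit \<omega>' a0 a1 j in
            if \<omega>' (J' - 1) then opt_bits \<phi> F \<omega>' k (b @ [True]) J' f2 f1
            else opt_bits \<phi> F \<omega>' k (b @ [False]) J' f0 f2) else \<infinity>)"
      using False unfolding unfold J_def by auto
    have hit: "\<exists>j>l. coin_hit \<omega> a0 a1 j"
      using Suc.prems(1) coin by (auto split: if_splits)
    then have "l < J \<and> coin_hit \<omega> a0 a1 J"
      unfolding J_def by (metis (mono_tags, lifting) LeastI_ex)
    then have J: "l < J" "coin_hit \<omega> a0 a1 J" "\<And>i. l < i \<Longrightarrow> i < J \<Longrightarrow> \<not> coin_hit \<omega> a0 a1 i"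
      unfolding J_def by (auto dest: not_less_Least)
    have "opt_bits \<phi> F \<omega> k (b @ [\<omega> (J - 1)]) J
        (if \<omega> (J - 1) then f2 else f0) (if \<omega> (J - 1) then f1 else f2) = enat N"
      using Suc.prems(1) hit unfolding coin by (cases "\<omega> (J - 1)") simp_all
    then have "J \<le> N"
      using opt_bits_ge by (metis enat_ord_simps(1))
    then have agree: "\<omega>' i = \<omega> i" if "l \<le> i" "i < J" for i
      using that Suc.prems(2) by simp
    have "opt_bits \<phi> F \<omega>' k b' J g0 g1 = enat N"
      if "opt_bits \<phi> F \<omega> k b' J g0 g1 = enat N" for b' g0 g1
      using Suc.IH[OF that] Suc.prems(2) J(1) by simp
    then show ?thesis
      using Suc.prems(1) hit Least_coin_hit_cong[OF J agree] agree[of "J - 1"] J(1)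
      unfolding coin coin' by (auto split: if_splits)
  qed
qed simp

section \<open>Counting coin prefixes\<close>

lemma card_prescribed_coordinates:
  assumes "finite U" "D \<subseteq> U" "Q \<subseteq> Pow U"
    and free: "\<And>S S'. S \<in> Q \<Longrightarrow> S' \<subseteq> U \<Longrightarrow> S - D = S' - D \<Longrightarrow> S' \<in> Q"
  shows "card {S \<in> Q. \<forall>i\<in>D. i \<in> S \<longleftrightarrow> p i} * 2 ^ card D = card Q"
proof -
  define P where "P = {S \<in> Q. \<forall>i\<in>D. i \<in> S \<longleftrightarrow> p i}"
  define glue where "glue = (\<lambda>(S, R). S - D \<union> R)"
  define unglue where "unglue S = (S - D \<union> {i \<in> D. p i}, S \<inter> D)" for S
  have glue_in: "S - D \<union> R \<in> Q" if "S \<in> Q" "R \<subseteq> D" for S R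
  proof (rule free[OF that(1)])
    show "S - D \<union> R \<subseteq> U"
      using that assms(2,3) by blast
    show "S - D = S - D \<union> R - D"
      using that(2) by blast
  qed
  have "bij_betw glue (P \<times> Pow D) Q"
  proof (rule bij_betw_byWitness[where f' = unglue])
    have "unglue (glue (S, R)) = (S, R)" if "S \<in> P" "R \<subseteq> D" for S R
    proof -
      have "S \<inter> D = {i \<in> D. p i}"
        using \<open>S \<in> P\<close> by (auto simp: P_def)
      then show ?thesis
        using \<open>R \<subseteq> D\<close> by (auto simp: unglue_def glue_def)
    qed
    then show "\<forall>X\<in>P \<times> Pow D. unglue (glue X) = X"
      by blast
    show "\<forall>S\<in>Q. glue (unglue S) = S"
      by (auto simp: unglue_def glue_def)
    show "glue ` (P \<times> Pow D) \<subseteq> Q"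
      using glue_in by (auto simp: glue_def P_def)
    have "S - D \<union> {i \<in> D. p i} \<in> P" if "S \<in> Q" for S
      using glue_in[OF that, of "{i \<in> D. p i}"] by (auto simp: P_def)
    then show "unglue ` Q \<subseteq> P \<times> Pow D"
      by (auto simp: unglue_def)
  qed
  then have "card (P \<times> Pow D) = card Q"
    by (rule bij_betw_same_card)
  then show ?thesis
    using finite_subset[OF assms(2,1)] by (simp add: P_def card_cartesian_product card_Pow)
qed

lemma coins_cylinder_prod_emb:
  "{\<omega>. \<forall>i<T. \<omega> i = (i \<in> S)} =
    prod_emb UNIV (\<lambda>_. measure_pmf (bernoulli_pmf (1 / 2))) {..<T} (Pi\<^sub>E {..<T} (\<lambda>i. {i \<in> S}))"
proof -
  have "(\<lambda>x. restrict x {..<T}) -` Pi\<^sub>E {..<T} (\<lambda>i. {i \<in> S}) = {\<omega>. \<forall>i<T. \<omega> i = (i \<in> S)}"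
    by (auto simp: PiE_def Pi_def restrict_def extensional_def)
  then show ?thesis
    by (simp add: prod_emb_def PiE_UNIV_domain)
qed

lemma sets_coins_cylinder: "{\<omega>. \<forall>i<T. \<omega> i = (i \<in> S)} \<in> sets coins"
  unfolding coins_cylinder_prod_emb coins_def by (rule sets_PiM_I) auto

lemma emeasure_coins_cylinder: "emeasure coins {\<omega>. \<forall>i<T. \<omega> i = (i \<in> S)} = ennreal ((1 / 2) ^ T)"
proof -
  have "emeasure coins {\<omega>. \<forall>i<T. \<omega> i = (i \<in> S)}
      = (\<Prod>i<T. emeasure (measure_pmf (bernoulli_pmf (1 / 2))) {i \<in> S})"
    unfolding coins_cylinder_prod_emb coins_def
    by (rule emeasure_PiM_emb) (auto simp: prob_space_measure_pmf)
  also have "\<dots> = (\<Prod>i<T. ennreal (1 / 2))"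
    by (intro prod.cong refl) (simp add: emeasure_pmf_single)
  also have "\<dots> = ennreal ((1 / 2) ^ T)"
    by (subst prod_ennreal) auto
  finally show ?thesis .
qed

lemma nn_integral_coins_prefix:
  fixes f :: "(nat \<Rightarrow> bool) \<Rightarrow> ennreal"
  assumes prefix: "\<And>\<omega> \<omega>'. (\<And>i. i < T \<Longrightarrow> \<omega>' i = \<omega> i) \<Longrightarrow> f \<omega>' = f \<omega>"
  shows "(\<integral>\<^sup>+\<omega>. f \<omega> \<partial>coins) = (\<Sum>S\<in>Pow {..<T}. f (\<lambda>i. i \<in> S)) * ennreal ((1 / 2) ^ T)"
proof -
  define cyl where "cyl S = {\<omega>. \<forall>i<T. \<omega> i = (i \<in> S)}" for S
  have cyl_sets: "cyl S \<in> sets coins" and cyl_measure: "emeasure coins (cyl S) = ennreal ((1 / 2) ^ T)" for S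
    unfolding cyl_def by (rule sets_coins_cylinder, rule emeasure_coins_cylinder)
  have f_sum: "f \<omega> = (\<Sum>S\<in>Pow {..<T}. f (\<lambda>i. i \<in> S) * indicator (cyl S) \<omega>)" for \<omega>
  proof -
    define S\<omega> where "S\<omega> = {i. i < T \<and> \<omega> i}"
    have "\<omega> \<in> cyl S \<longleftrightarrow> S = S\<omega>" if "S \<in> Pow {..<T}" for S
    proof
      assume "\<omega> \<in> cyl S"
      then have "i \<in> S \<longleftrightarrow> i \<in> S\<omega>" for i
        using that by (cases "i < T") (auto simp: cyl_def S\<omega>_def)
      then show "S = S\<omega>"
        by blast
    next
      assume "S = S\<omega>"
      then show "\<omega> \<in> cyl S"
        by (simp add: cyl_def S\<omega>_def)
    qed
    then have "(\<Sum>S\<in>Pow {..<T}. f (\<lambda>i. i \<in> S) * indicator (cyl S) \<omega>)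
        = (\<Sum>S\<in>Pow {..<T}. if S = S\<omega> then f (\<lambda>i. i \<in> S\<omega>) else 0)"
      by (intro sum.cong) (auto simp: indicator_def)
    also have "\<dots> = f (\<lambda>i. i \<in> S\<omega>)"
      by (simp add: sum.delta' S\<omega>_def subset_iff)
    also have "\<dots> = f \<omega>"
      by (rule prefix) (simp add: S\<omega>_def)
    finally show ?thesis
      by simp
  qed
  have "(\<integral>\<^sup>+\<omega>. f \<omega> \<partial>coins) = (\<integral>\<^sup>+\<omega>. (\<Sum>S\<in>Pow {..<T}. f (\<lambda>i. i \<in> S) * indicator (cyl S) \<omega>) \<partial>coins)"
    by (rule nn_integral_cong) (rule f_sum)
  also have "\<dots> = (\<Sum>S\<in>Pow {..<T}. \<integral>\<^sup>+\<omega>. f (\<lambda>i. i \<in> S) * indicator (cyl S) \<omega> \<partial>coins)"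
    by (rule nn_integral_sum) (auto intro!: borel_measurable_times_ennreal borel_measurable_indicator cyl_sets)
  also have "\<dots> = (\<Sum>S\<in>Pow {..<T}. f (\<lambda>i. i \<in> S) * ennreal ((1 / 2) ^ T))"
    by (simp add: nn_integral_cmult_indicator cyl_sets cyl_measure)
  finally show ?thesis
    by (simp add: sum_distrib_right)
qed

lemma sum_eq_sum_card_less:
  fixes e :: "'a \<Rightarrow> nat"
  assumes "finite A" "\<And>S. S \<in> A \<Longrightarrow> e S \<le> T"
  shows "(\<Sum>S\<in>A. e S) = (\<Sum>t<T. card {S \<in> A. t < e S})"
proof -
  have "e S = (\<Sum>t<T. of_bool (t < e S))" if "S \<in> A" for S
  proof -
    have "{..<T} \<inter> {t. t < e S} = {..<e S}"
      using assms(2)[OF that] by auto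
    then show ?thesis
      by (simp add: Int_def)
  qed
  then have "(\<Sum>S\<in>A. e S) = (\<Sum>S\<in>A. \<Sum>t<T. of_bool (t < e S))"
    by (rule sum.cong[OF refl])
  also have "\<dots> = (\<Sum>t<T. \<Sum>S\<in>A. of_bool (t < e S))"
    by (rule sum.swap)
  finally show ?thesis
    using assms(1) by (simp add: Int_def)
qed

lemma sum_min_one_pow2:
  "(\<Sum>t<m + d. min 1 ((2::real) ^ m / 2 ^ t)) = real m + 2 - 2 ^ (m + 1) / 2 ^ (m + d)"
proof (induction d)
  case 0
  have "min 1 ((2::real) ^ m / 2 ^ t) = 1" if "t < m" for t
    using that power_increasing[of t m "2::real"] by simp
  then show ?case
    by simp
next
  case (Suc d)
  have "(2::real) ^ m \<le> 2 ^ (m + d)"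
    by (rule power_increasing) auto
  then show ?case
    using Suc.IH by (simp add: field_simps)
qed

section \<open>Values with a bounded mantissa\<close>

text \<open>For \<open>v < 2 ^ (m + T + 1)\<close>: \<open>v\<close> has at most \<open>m\<close> binary digits after its leading
  one.\<close>

definition mantissa_bounded :: "nat \<Rightarrow> nat \<Rightarrow> nat \<Rightarrow> bool" where
  "mantissa_bounded m T v \<longleftrightarrow> (\<forall>r\<le>T. \<not> 2 ^ r dvd v \<longrightarrow> v < 2 ^ (m + r))"

text \<open>Above \<open>2 ^ (m + r)\<close> all values with bounded mantissa are multiples of \<open>2 ^ r\<close>.\<close>

lemma diff_mod_le_clipped:
  assumes "v0 \<le> v1" "mantissa_bounded m T v0" "mantissa_bounded m T v1" "r \<le> T"
  shows "(v1 - v0) mod 2 ^ r \<le> min v1 (2 ^ (m + r)) - min v0 (2 ^ (m + r))"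
proof -
  define B :: nat where "B = 2 ^ (m + r)"
  have big_dvd: "v \<ge> B \<Longrightarrow> 2 ^ r dvd v" if "mantissa_bounded m T v" for v
    using that assms(4) by (auto simp: mantissa_bounded_def B_def)
  have "2 ^ r dvd B"
    by (simp add: B_def power_add)
  consider "v1 < B" | "v0 < B" "B \<le> v1" | "B \<le> v0"
    by linarith
  then have "(v1 - v0) mod 2 ^ r \<le> min v1 B - min v0 B"
  proof cases
    case 1
    then show ?thesis
      using assms(1) by (simp add: min_def le_trans[OF mod_less_eq_dividend])
  next
    case 2
    then have "2 ^ r dvd v1 - B"
      using big_dvd[OF assms(3)] \<open>2 ^ r dvd B\<close> by (simp add: dvd_diff_nat)
    then obtain q where "v1 - B = 2 ^ r * q"
      by (rule dvdE)
    then have "v1 - v0 = (B - v0) + 2 ^ r * q"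
      using 2 by simp
    then have "(v1 - v0) mod 2 ^ r = (B - v0) mod 2 ^ r"
      by simp
    then show ?thesis
      using 2 by (simp add: le_trans[OF mod_less_eq_dividend])
  next
    case 3
    then have "2 ^ r dvd v1 - v0"
      using big_dvd[OF assms(2)] big_dvd[OF assms(3)] assms(1) by (simp add: dvd_diff_nat)
    then show ?thesis
      by simp
  qed
  then show ?thesis
    by (simp add: B_def)
qed

section \<open>Opt on a CDF with values in \<open>2 ^ (- T) \<nat>\<close>\<close>

lemma dict_less_append_False_True:
  "length c = length c' \<Longrightarrow> dict_less (b @ False # c) (b @ True # c')"
  unfolding dict_less_def by (intro conjI exI[of _ "length b"]) (auto simp: nth_append)

lemma dict_less_replicate_True:
  "length c = k \<Longrightarrow> c \<noteq> replicate k True \<Longrightarrow> dict_less (b @ c) (b @ replicate k True)"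
proof (induction c arbitrary: b k)
  case (Cons a c)
  then obtain k' where k: "k = Suc k'"
    by (cases k) auto
  show ?case
  proof (cases a)
    case True
    then show ?thesis
      using Cons.IH[of k' "b @ [True]"] Cons.prems k by simp
  next
    case False
    then show ?thesis
      using dict_less_append_False_True[of c "replicate k' True" b] Cons.prems k by simp
  qed
qed simp

locale scaled_cdf =
  fixes \<phi> :: "bool list \<Rightarrow> bool list" and F :: "bool list \<Rightarrow> real" and n T m :: nat
    and G :: "bool list \<Rightarrow> nat"
  assumes F_eq: "length c = n \<Longrightarrow> F (\<phi> c) = real (G c) / 2 ^ T"
    and G_mono: "length c = n \<Longrightarrow> length c' = n \<Longrightarrow> dict_less c c' \<Longrightarrow> G c \<le> G c'"
    and G_mantissa: "length c = n \<Longrightarrow> mantissa_bounded m T (G c)"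
    and G_top: "G (replicate n True) = 2 ^ T"
begin

abbreviation opt :: "(nat \<Rightarrow> bool) \<Rightarrow> nat \<Rightarrow> bool list \<Rightarrow> nat \<Rightarrow> nat \<Rightarrow> nat \<Rightarrow> enat" where
  "opt \<omega> k b l v0 v1 \<equiv> opt_bits \<phi> F \<omega> k b l (real v0 / 2 ^ T) (real v1 / 2 ^ T)"

lemma G_le_top: "length c = n \<Longrightarrow> G c \<le> 2 ^ T"
  using G_mono[of c "replicate n True"] dict_less_replicate_True[of c n "[]"] G_top
  by (cases "c = replicate n True") auto

definition mid :: "nat \<Rightarrow> bool list \<Rightarrow> nat" where
  "mid k b = G (b @ [False] @ replicate k True)"

abbreviation lo :: "nat \<Rightarrow> bool list \<Rightarrow> nat \<Rightarrow> bool \<Rightarrow> nat" where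
  "lo k b v0 c \<equiv> if c then mid k b else v0"

abbreviation hi :: "nat \<Rightarrow> bool list \<Rightarrow> nat \<Rightarrow> bool \<Rightarrow> nat" where
  "hi k b v1 c \<equiv> if c then v1 else mid k b"

text \<open>The states Opt passes through: at prefix \<open>b\<close>, with \<open>k\<close> bits of the output still to
  choose and the current interval \<open>[v0 / 2 ^ T, v1 / 2 ^ T]\<close>.\<close>

definition node :: "nat \<Rightarrow> bool list \<Rightarrow> nat \<Rightarrow> nat \<Rightarrow> bool" where
  "node k b v0 v1 \<longleftrightarrow> length b + k = n \<and> v1 = G (b @ replicate k True) \<and>
     (\<forall>c. length c = k \<longrightarrow> v0 \<le> G (b @ c)) \<and> mantissa_bounded m T v0"

lemma node_root: "node n [] 0 (2 ^ T)"
  by (simp add: node_def mantissa_bounded_def G_top)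

lemma node_le: "node k b v0 v1 \<Longrightarrow> v0 \<le> v1"
  by (simp add: node_def)

lemma node_le_top: "node k b v0 v1 \<Longrightarrow> v1 \<le> 2 ^ T"
  by (simp add: node_def G_le_top)

lemma node_mantissa: "node k b v0 v1 \<Longrightarrow> mantissa_bounded m T v0 \<and> mantissa_bounded m T v1"
  by (simp add: node_def G_mantissa)

lemma node_mid:
  assumes "node (Suc k) b v0 v1"
  shows "v0 \<le> mid k b" "mid k b \<le> v1"
proof -
  show "v0 \<le> mid k b"
    using assms by (simp add: node_def mid_def)
  have "length b + Suc k = n" "v1 = G (b @ True # replicate k True)"
    using assms by (simp_all add: node_def replicate_append_same[symmetric])
  then show "mid k b \<le> v1"
    using G_mono dict_less_append_False_True[of "replicate k True" "replicate k True" b]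
    by (simp add: mid_def)
qed

lemma node_child:
  assumes "node (Suc k) b v0 v1"
  shows "node k (b @ [c]) (lo k b v0 c) (hi k b v1 c)"
proof -
  have len: "length b + Suc k = n" and "v1 = G (b @ True # replicate k True)"
    and "\<And>c. length c = Suc k \<Longrightarrow> v0 \<le> G (b @ c)" and "mantissa_bounded m T v0"
    using assms by (simp_all add: node_def replicate_append_same[symmetric])
  moreover have "mid k b \<le> G (b @ True # c)" if "length c = k" for c
    using G_mono dict_less_append_False_True[of "replicate k True" c b] len that
    by (simp add: mid_def)
  moreover have "mantissa_bounded m T (mid k b)"
    using G_mantissa len by (simp add: mid_def)
  ultimately show ?thesis
    by (cases c) (auto simp: node_def mid_def replicate_append_same[symmetric])
qed

lemma opt_Suc_node:
  assumes "node (Suc k) b v0 v1"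
  defines "s \<equiv> mid k b"
  defines "x \<equiv> s - v0" and "y \<equiv> v1 - s"
  shows "opt \<omega> (Suc k) b l v0 v1 =
    (if s = v1 then opt \<omega> k (b @ [False]) l v0 s
     else if s = v0 then opt \<omega> k (b @ [True]) l s v1
     else if 0 < l \<and> digit T x l \<and> \<not> digit T y l then opt \<omega> k (b @ [False]) l v0 s
     else if 0 < l \<and> \<not> digit T x l \<and> digit T y l then opt \<omega> k (b @ [True]) l s v1
     else if \<exists>j>l. coin_hit \<omega> (digit T x) (digit T y) j then
       (let j = LEAST j. l < j \<and> coin_hit \<omega> (digit T x) (digit T y) j in
          if \<omega> (j - 1) then opt \<omega> k (b @ [True]) j s v1 else opt \<omega> k (b @ [False]) j v0 s)
     else \<infinity>)"
proof -
  have "F (\<phi> (b @ [False] @ replicate k True)) = real s / 2 ^ T"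
    using assms(1) F_eq by (simp add: node_def s_def mid_def)
  moreover have "bin_digit (real s / 2 ^ T - real v0 / 2 ^ T) = digit T x"
    "bin_digit (real v1 / 2 ^ T - real s / 2 ^ T) = digit T y"
    using node_mid[OF assms(1)] by (simp_all add: bin_digit_dyadic_diff s_def x_def y_def)
  moreover have "real s / 2 ^ T = real v / 2 ^ T \<longleftrightarrow> s = v" for v
    by simp
  ultimately show ?thesis
    unfolding opt_bits_Suc[of \<phi> F \<omega> k b l] Let_def by presburger
qed

lemma opt_Suc_degenerate:
  assumes "node (Suc k) b v0 v1" "mid k b = v1 \<or> mid k b = v0"
  defines "c \<equiv> mid k b \<noteq> v1"
  shows "opt \<omega> (Suc k) b l v0 v1 = opt \<omega> k (b @ [c]) l (lo k b v0 c) (hi k b v1 c)"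
  using assms(2) unfolding opt_Suc_node[OF assms(1)] c_def by auto

lemma opt_Suc_decided:
  assumes "node (Suc k) b v0 v1" "mid k b \<noteq> v1" "mid k b \<noteq> v0"
    and "0 < l" "digit T (mid k b - v0) l \<noteq> digit T (v1 - mid k b) l"
  defines "c \<equiv> digit T (v1 - mid k b) l"
  shows "opt \<omega> (Suc k) b l v0 v1 = opt \<omega> k (b @ [c]) l (lo k b v0 c) (hi k b v1 c)"
  using assms(2-5) unfolding opt_Suc_node[OF assms(1)] c_def by auto

lemma opt_Suc_carry:
  fixes k l v0 v1 :: nat and b :: "bool list" and \<omega> :: "nat \<Rightarrow> bool"
  defines "x \<equiv> mid k b - v0" and "y \<equiv> v1 - mid k b"
  assumes node: "node (Suc k) b v0 v1" and proper: "mid k b \<noteq> v1" "mid k b \<noteq> v0"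
    and undecided: "\<not> (0 < l \<and> digit T x l \<noteq> digit T y l)" and carry: "carry T x y l"
  obtains j where
    "opt \<omega> (Suc k) b l v0 v1 = opt \<omega> k (b @ [\<omega> (j - 1)]) j (lo k b v0 (\<omega> (j - 1))) (hi k b v1 (\<omega> (j - 1)))"
    "l < j" "j \<le> carry_origin T x y l" "digit T (if \<omega> (j - 1) then y else x) j"
    "\<And>i. l < i \<Longrightarrow> i < j \<Longrightarrow> \<omega> (i - 1) = digit T x i"
proof -
  define R where "R = carry_origin T x y l"
  define J where "J = (LEAST j. l < j \<and> coin_hit \<omega> (digit T x) (digit T y) j)"
  have R: "l < R" "coin_hit \<omega> (digit T x) (digit T y) R"
    using carry_origin(1,3,4)[OF carry] by (simp_all add: R_def coin_hit_def)
  then have J: "l < J" "coin_hit \<omega> (digit T x) (digit T y) J"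
    using LeastI[of "\<lambda>j. l < j \<and> coin_hit \<omega> (digit T x) (digit T y) j" R] by (simp_all add: J_def)
  have "J \<le> R"
    unfolding J_def by (rule Least_le) (use R in simp)
  have between: "\<omega> (i - 1) = digit T x i" if "l < i" "i < J" for i
  proof -
    have "\<not> coin_hit \<omega> (digit T x) (digit T y) i"
      using not_less_Least[of i] that unfolding J_def by blast
    moreover have "digit T x i \<noteq> digit T y i"
      using carry_origin(5)[OF carry that(1)] that(2) \<open>J \<le> R\<close> by (simp add: R_def)
    ultimately show ?thesis
      by (auto simp: coin_hit_def)
  qed
  have branches: "(mid k b = v1) = False" "(mid k b = v0) = False"
    "(0 < l \<and> digit T x l \<and> \<not> digit T y l) = False" "(0 < l \<and> \<not> digit T x l \<and> digit T y l) = False"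
    "(\<exists>j>l. coin_hit \<omega> (digit T x) (digit T y) j) = True"
    using proper undecided R by auto
  have "opt \<omega> (Suc k) b l v0 v1 = opt \<omega> k (b @ [\<omega> (J - 1)]) J (lo k b v0 (\<omega> (J - 1))) (hi k b v1 (\<omega> (J - 1)))"
    unfolding opt_Suc_node[OF node] Let_def x_def[symmetric] y_def[symmetric] J_def[symmetric]
      branches if_False if_True
    by simp
  moreover have "digit T (if \<omega> (J - 1) then y else x) J"
    using J(2) by (auto simp: coin_hit_def)
  ultimately show thesis
    using that J(1) \<open>J \<le> R\<close> between by (simp add: R_def)
qed

lemma opt_Suc_step:
  assumes node: "node (Suc k) b v0 v1" and "digit T (v1 - v0) l"
  obtains c j where "opt \<omega> (Suc k) b l v0 v1 = opt \<omega> k (b @ [c]) j (lo k b v0 c) (hi k b v1 c)"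
    and "digit T (hi k b v1 c - lo k b v0 c) j"
proof -
  define x where "x = mid k b - v0"
  define y where "y = v1 - mid k b"
  have child: "digit T (hi k b v1 c - lo k b v0 c) j" if "digit T (if c then y else x) j" for c j
    using that by (cases c) (simp_all add: x_def y_def)
  have "v0 \<le> mid k b" "mid k b \<le> v1" "v1 \<le> 2 ^ T"
    using node_mid[OF node] node_le_top[OF node] by simp_all
  consider (degenerate) "mid k b = v1 \<or> mid k b = v0"
    | (decided) "mid k b \<noteq> v1" "mid k b \<noteq> v0" "0 < l" "digit T x l \<noteq> digit T y l"
    | (carry) "mid k b \<noteq> v1" "mid k b \<noteq> v0" "\<not> (0 < l \<and> digit T x l \<noteq> digit T y l)"
    by blast
  then show thesis
  proof cases
    case degenerate
    then have "digit T (if mid k b \<noteq> v1 then y else x) l"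
      using \<open>digit T (v1 - v0) l\<close> by (auto simp: x_def y_def)
    then show ?thesis
      using that[OF opt_Suc_degenerate[OF node degenerate] child] by blast
  next
    case decided
    then have "digit T (if digit T y l then y else x) l"
      by auto
    then show ?thesis
      using that[OF opt_Suc_decided[OF node decided[unfolded x_def y_def]] child] by (simp add: y_def)
  next
    case carry
    have "x < 2 ^ T" "y < 2 ^ T" "digit T (x + y) l"
      using carry(1,2) \<open>v0 \<le> mid k b\<close> \<open>mid k b \<le> v1\<close> \<open>v1 \<le> 2 ^ T\<close> \<open>digit T (v1 - v0) l\<close>
      by (simp_all add: x_def y_def)
    then have "carry T x y l"
      using carry(3) by (intro carry_if_digit_add) auto
    then obtain j where
      "opt \<omega> (Suc k) b l v0 v1 = opt \<omega> k (b @ [\<omega> (j - 1)]) j (lo k b v0 (\<omega> (j - 1))) (hi k b v1 (\<omega> (j - 1)))"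
      "digit T (if \<omega> (j - 1) then y else x) j"
      using opt_Suc_carry[OF node carry(1,2)] carry(3) unfolding x_def y_def by blast
    then show ?thesis
      using that child by blast
  qed
qed

lemma opt_le_T:
  assumes "node k b v0 v1" "digit T (v1 - v0) l"
  shows "opt \<omega> k b l v0 v1 \<le> enat T"
  using assms
proof (induction k arbitrary: b l v0 v1)
  case 0
  then show ?case
    by (simp add: digit_def)
next
  case (Suc k)
  obtain c j where "opt \<omega> (Suc k) b l v0 v1 = opt \<omega> k (b @ [c]) j (lo k b v0 c) (hi k b v1 c)"
    and "digit T (hi k b v1 c - lo k b v0 c) j"
    using opt_Suc_step[OF Suc.prems] .
  then show ?case
    using Suc.IH[OF node_child[OF Suc.prems(1)]] by simp
qed

lemma opt_prefix_cong:
  assumes "node k b v0 v1" "digit T (v1 - v0) l" "\<And>i. i < T \<Longrightarrow> \<omega>' i = \<omega> i"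
  shows "opt \<omega>' k b l v0 v1 = opt \<omega> k b l v0 v1"
proof -
  obtain N where N: "opt \<omega> k b l v0 v1 = enat N" "N \<le> T"
    using opt_le_T[OF assms(1,2), of \<omega>] by (cases "opt \<omega> k b l v0 v1") auto
  have "\<omega>' i = \<omega> i" if "i < N" for i
    using N(2) \<open>i < N\<close> by (intro assms(3)) linarith
  then have "opt \<omega>' k b l v0 v1 = enat N"
    by (rule opt_bits_stopping_time[OF N(1)])
  then show ?thesis
    using N(1) by simp
qed

text \<open>Coin prefixes of length \<open>T\<close>, given as the sets of positions of ones, on which Opt
  draws more than \<open>t\<close> bits from the given state.\<close>

definition long_runs :: "nat \<Rightarrow> nat \<Rightarrow> bool list \<Rightarrow> nat \<Rightarrow> nat \<Rightarrow> nat \<Rightarrow> nat set set" where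
  "long_runs t k b l v0 v1 = {S \<in> Pow {..<T}. enat t < opt (\<lambda>i. i \<in> S) k b l v0 v1}"

lemma card_long_runs_prescribed:
  assumes "node k b v0 v1" "digit T (v1 - v0) j" "l \<le> j" "j \<le> t"
  shows "card {S \<in> long_runs t k b j v0 v1. \<forall>i\<in>{l..<j}. i \<in> S \<longleftrightarrow> p i} * 2 ^ (t - l)
    = card (long_runs t k b j v0 v1) * 2 ^ (t - j)"
proof -
  have "j \<le> T"
    using assms(2) by (simp add: digit_def)
  have "card {S \<in> long_runs t k b j v0 v1. \<forall>i\<in>{l..<j}. i \<in> S \<longleftrightarrow> p i} * 2 ^ card {l..<j}
    = card (long_runs t k b j v0 v1)"
  proof (rule card_prescribed_coordinates)
    show "{l..<j} \<subseteq> {..<T}" "long_runs t k b j v0 v1 \<subseteq> Pow {..<T}"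
      using \<open>j \<le> T\<close> by (auto simp: long_runs_def)
    fix S S'
    assume S: "S \<in> long_runs t k b j v0 v1" and "S' \<subseteq> {..<T}" "S - {l..<j} = S' - {l..<j}"
    obtain N where N: "opt (\<lambda>i. i \<in> S) k b j v0 v1 = enat N"
      using opt_le_T[OF assms(1,2), of "\<lambda>i. i \<in> S"] by (cases "opt (\<lambda>i. i \<in> S) k b j v0 v1") auto
    have agree: "i \<in> S' \<longleftrightarrow> i \<in> S" if "j \<le> i" for i
    proof -
      have "i \<in> S - {l..<j} \<longleftrightarrow> i \<in> S' - {l..<j}"
        using \<open>S - {l..<j} = S' - {l..<j}\<close> by simp
      then show ?thesis
        using that by simp
    qed
    have "opt (\<lambda>i. i \<in> S') k b j v0 v1 = enat N"
      by (rule opt_bits_stopping_time[OF N]) (simp add: agree)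
    then show "S' \<in> long_runs t k b j v0 v1"
      using S N \<open>S' \<subseteq> {..<T}\<close> by (simp add: long_runs_def)
  qed simp
  moreover have "(2::nat) ^ (t - l) = 2 ^ (j - l) * 2 ^ (t - j)"
    using assms(3,4) by (simp flip: power_add)
  ultimately show ?thesis
    by (simp add: mult.assoc[symmetric])
qed

lemma long_runs_Suc_degenerate:
  assumes "node (Suc k) b v0 v1" "mid k b = v1 \<or> mid k b = v0"
  defines "c \<equiv> mid k b \<noteq> v1"
  shows "long_runs t (Suc k) b l v0 v1 = long_runs t k (b @ [c]) l (lo k b v0 c) (hi k b v1 c)"
  unfolding long_runs_def opt_Suc_degenerate[OF assms(1,2)] c_def ..

lemma long_runs_Suc_decided:
  assumes "node (Suc k) b v0 v1" "mid k b \<noteq> v1" "mid k b \<noteq> v0"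
    and "0 < l" "digit T (mid k b - v0) l \<noteq> digit T (v1 - mid k b) l"
  defines "c \<equiv> digit T (v1 - mid k b) l"
  shows "long_runs t (Suc k) b l v0 v1 = long_runs t k (b @ [c]) l (lo k b v0 c) (hi k b v1 c)"
  unfolding long_runs_def opt_Suc_decided[OF assms(1-5)] c_def ..

text \<open>While a carry propagates, Opt draws one bit per digit, and every bit but the last
  one is forced: it must pick the child whose digit is zero.\<close>

lemma long_runs_carry_subset:
  fixes k l t v0 v1 :: nat and b :: "bool list"
  defines "x \<equiv> mid k b - v0" and "y \<equiv> v1 - mid k b"
  assumes node: "node (Suc k) b v0 v1" and proper: "mid k b \<noteq> v1" "mid k b \<noteq> v0"
    and undecided: "\<not> (0 < l \<and> digit T x l \<noteq> digit T y l)" and carry: "carry T x y l"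
  shows "long_runs t (Suc k) b l v0 v1 \<subseteq>
    (\<Union>(c, j)\<in>{(c, j). l < j \<and> j \<le> t \<and> j \<le> carry_origin T x y l \<and> digit T (if c then y else x) j}.
      {S \<in> long_runs t k (b @ [c]) j (lo k b v0 c) (hi k b v1 c).
        \<forall>i\<in>{l..<j}. i \<in> S \<longleftrightarrow> (if i = j - 1 then c else digit T x (i + 1))})
    \<union> {S \<in> Pow {..<T}. t < carry_origin T x y l \<and> (\<forall>i\<in>{l..<t}. i \<in> S \<longleftrightarrow> digit T x (i + 1))}"
    (is "_ \<subseteq> ?forced \<union> ?pending")
proof
  fix S
  assume S: "S \<in> long_runs t (Suc k) b l v0 v1"
  obtain j where step:
    "opt (\<lambda>i. i \<in> S) (Suc k) b l v0 v1 =
      opt (\<lambda>i. i \<in> S) k (b @ [j - 1 \<in> S]) j (lo k b v0 (j - 1 \<in> S)) (hi k b v1 (j - 1 \<in> S))"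
    and j: "l < j" "j \<le> carry_origin T x y l" "digit T (if j - 1 \<in> S then y else x) j"
    and forced: "\<And>i. l < i \<Longrightarrow> i < j \<Longrightarrow> i - 1 \<in> S \<longleftrightarrow> digit T x i"
    using opt_Suc_carry[OF node proper undecided[unfolded x_def y_def] carry[unfolded x_def y_def],
        of "\<lambda>i. i \<in> S"]
    unfolding x_def y_def by blast
  have forced': "i \<in> S \<longleftrightarrow> digit T x (i + 1)" if "l \<le> i" "i + 1 < j" for i
    using forced[of "i + 1"] that by simp
  show "S \<in> ?forced \<union> ?pending"
  proof (cases "j \<le> t")
    case True
    then have "S \<in> long_runs t k (b @ [j - 1 \<in> S]) j (lo k b v0 (j - 1 \<in> S)) (hi k b v1 (j - 1 \<in> S))"
      using S step by (simp add: long_runs_def)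
    moreover have "\<forall>i\<in>{l..<j}. i \<in> S \<longleftrightarrow> (if i = j - 1 then j - 1 \<in> S else digit T x (i + 1))"
      using forced' by auto
    ultimately show ?thesis
      using True j by blast
  next
    case False
    moreover have "S \<subseteq> {..<T}"
      using S by (simp add: long_runs_def)
    ultimately show ?thesis
      using forced' j(2) by auto
  qed
qed

lemma card_long_runs_carry:
  fixes k l t v0 v1 :: nat and b :: "bool list"
  defines "x \<equiv> mid k b - v0" and "y \<equiv> v1 - mid k b"
  assumes node: "node (Suc k) b v0 v1" and proper: "mid k b \<noteq> v1" "mid k b \<noteq> v0"
    and undecided: "\<not> (0 < l \<and> digit T x l \<noteq> digit T y l)" and carry: "carry T x y l"
    and "l \<le> t" "t < T"
  shows "card (long_runs t (Suc k) b l v0 v1) * 2 ^ (t - l) \<le>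
    (\<Sum>(c, j)\<in>{(c, j). l < j \<and> j \<le> t \<and> j \<le> carry_origin T x y l \<and> digit T (if c then y else x) j}.
       card (long_runs t k (b @ [c]) j (lo k b v0 c) (hi k b v1 c)) * 2 ^ (t - j))
    + of_bool (t < carry_origin T x y l) * 2 ^ T"
proof -
  define Ch where "Ch = {(c, j). l < j \<and> j \<le> t \<and> j \<le> carry_origin T x y l \<and> digit T (if c then y else x) j}"
  define forced where "forced = (\<lambda>(c, j). {S \<in> long_runs t k (b @ [c]) j (lo k b v0 c) (hi k b v1 c).
    \<forall>i\<in>{l..<j}. i \<in> S \<longleftrightarrow> (if i = j - 1 then c else digit T x (i + 1))})"
  define pending where "pending =
    {S \<in> Pow {..<T}. t < carry_origin T x y l \<and> (\<forall>i\<in>{l..<t}. i \<in> S \<longleftrightarrow> digit T x (i + 1))}"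
  have "finite Ch"
    by (rule finite_subset[of _ "UNIV \<times> {..t}"]) (auto simp: Ch_def)
  have "finite (forced p)" for p
    by (rule finite_subset[of _ "Pow {..<T}"]) (auto simp: forced_def long_runs_def split: prod.splits)
  moreover have "long_runs t (Suc k) b l v0 v1 \<subseteq> (\<Union>p\<in>Ch. forced p) \<union> pending"
    using long_runs_carry_subset[OF node proper undecided[unfolded x_def y_def] carry[unfolded x_def y_def]]
    unfolding Ch_def forced_def pending_def x_def y_def .
  ultimately have "card (long_runs t (Suc k) b l v0 v1) \<le> card ((\<Union>p\<in>Ch. forced p) \<union> pending)"
    using \<open>finite Ch\<close> by (intro card_mono) (auto simp: pending_def)
  also have "\<dots> \<le> (\<Sum>p\<in>Ch. card (forced p)) + card pending"
    using card_Un_le card_UN_le[OF \<open>finite Ch\<close>, of forced] by (meson add_right_mono le_trans)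
  finally have "card (long_runs t (Suc k) b l v0 v1) * 2 ^ (t - l) \<le>
      ((\<Sum>p\<in>Ch. card (forced p)) + card pending) * 2 ^ (t - l)"
    by (rule mult_right_mono) simp
  also have "\<dots> = (\<Sum>p\<in>Ch. card (forced p) * 2 ^ (t - l)) + card pending * 2 ^ (t - l)"
    by (simp add: sum_distrib_right distrib_right)
  also have "(\<Sum>p\<in>Ch. card (forced p) * 2 ^ (t - l)) =
      (\<Sum>(c, j)\<in>Ch. card (long_runs t k (b @ [c]) j (lo k b v0 c) (hi k b v1 c)) * 2 ^ (t - j))"
  proof (rule sum.cong[OF refl], clarify)
    fix c j
    assume "(c, j) \<in> Ch"
    then have "digit T (hi k b v1 c - lo k b v0 c) j" "l \<le> j" "j \<le> t"
      by (auto simp: Ch_def x_def y_def split: if_splits)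
    then show "card (forced (c, j)) * 2 ^ (t - l) =
        card (long_runs t k (b @ [c]) j (lo k b v0 c) (hi k b v1 c)) * 2 ^ (t - j)"
      unfolding forced_def prod.case by (rule card_long_runs_prescribed[OF node_child[OF node]])
  qed
  also have "card pending * 2 ^ (t - l) = of_bool (t < carry_origin T x y l) * 2 ^ T"
  proof (cases "t < carry_origin T x y l")
    case True
    have "{l..<t} \<subseteq> {..<T}"
      using \<open>t < T\<close> by auto
    then show ?thesis
      using True card_prescribed_coordinates[of "{..<T}" "{l..<t}" "Pow {..<T}" "\<lambda>i. digit T x (i + 1)"]
      by (simp add: pending_def card_Pow)
  qed (simp add: pending_def)
  finally show ?thesis
    unfolding Ch_def .
qed

lemma card_long_runs_Suc_le:
  fixes k l t v0 v1 :: nat and b :: "bool list"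
  defines "x \<equiv> mid k b - v0" and "y \<equiv> v1 - mid k b"
  assumes node: "node (Suc k) b v0 v1" and proper: "mid k b \<noteq> v1" "mid k b \<noteq> v0"
    and "l \<le> t" "t < T" "digit T (v1 - v0) l"
  shows "card (long_runs t (Suc k) b l v0 v1) * 2 ^ (t - l) \<le>
    (\<Sum>(c, j)\<in>next_nodes T t x y l. card (long_runs t k (b @ [c]) j (lo k b v0 c) (hi k b v1 c)) * 2 ^ (t - j))
    + of_bool (\<not> (0 < l \<and> digit T x l \<noteq> digit T y l) \<and> t < carry_origin T x y l) * 2 ^ T"
proof (cases "0 < l \<and> digit T x l \<noteq> digit T y l")
  case True
  then show ?thesis
    using long_runs_Suc_decided[OF node proper, of l t] by (simp add: next_nodes_def x_def y_def)
next
  case False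
  have "mid k b \<le> v1" "v1 \<le> 2 ^ T" "v0 \<le> mid k b"
    using node_mid[OF node] node_le_top[OF node] by simp_all
  then have "x < 2 ^ T" "y < 2 ^ T" "digit T (x + y) l"
    using proper \<open>digit T (v1 - v0) l\<close> by (simp_all add: x_def y_def)
  then have "carry T x y l"
    using False by (intro carry_if_digit_add) auto
  moreover have "next_nodes T t x y l =
      {(c, j). l < j \<and> j \<le> t \<and> j \<le> carry_origin T x y l \<and> digit T (if c then y else x) j}"
    unfolding next_nodes_def by (rule if_not_P[OF False])
  ultimately show ?thesis
    using card_long_runs_carry[OF node proper False[unfolded x_def y_def], of t] False \<open>l \<le> t\<close> \<open>t < T\<close>
    unfolding x_def y_def by simp
qed

primrec carries :: "nat \<Rightarrow> nat \<Rightarrow> bool list \<Rightarrow> nat \<Rightarrow> nat \<Rightarrow> nat" where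
  "carries t 0 b v0 v1 = 0"
| "carries t (Suc k) b v0 v1 = of_bool (carry T (mid k b - v0) (v1 - mid k b) t)
    + carries t k (b @ [False]) v0 (mid k b) + carries t k (b @ [True]) (mid k b) v1"

text \<open>The factor \<open>2 ^ (- l)\<close> accounts for the \<open>l\<close> coins that are forced on the way into
  a state entered after \<open>l\<close> drawn bits.\<close>

definition long_runs_weight :: "nat \<Rightarrow> nat \<Rightarrow> bool list \<Rightarrow> nat \<Rightarrow> nat \<Rightarrow> nat" where
  "long_runs_weight t k b v0 v1 =
    (\<Sum>l | l \<le> t \<and> digit T (v1 - v0) l. card (long_runs t k b l v0 v1) * 2 ^ (t - l))"

lemma long_runs_weight_Suc_degenerate:
  assumes "node (Suc k) b v0 v1" "mid k b = v1 \<or> mid k b = v0"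
  defines "c \<equiv> mid k b \<noteq> v1"
  shows "long_runs_weight t (Suc k) b v0 v1 = long_runs_weight t k (b @ [c]) (lo k b v0 c) (hi k b v1 c)"
proof -
  have "hi k b v1 c - lo k b v0 c = v1 - v0"
    using assms(2) by (auto simp: c_def)
  then show ?thesis
    using long_runs_Suc_degenerate[OF assms(1,2)] by (simp add: long_runs_weight_def c_def)
qed

lemma long_runs_weight_Suc_le:
  fixes k t v0 v1 :: nat and b :: "bool list"
  defines "x \<equiv> mid k b - v0" and "y \<equiv> v1 - mid k b"
  assumes node: "node (Suc k) b v0 v1" and proper: "mid k b \<noteq> v1" "mid k b \<noteq> v0" and "t < T"
  shows "long_runs_weight t (Suc k) b v0 v1 \<le> long_runs_weight t k (b @ [False]) v0 (mid k b)
    + long_runs_weight t k (b @ [True]) (mid k b) v1 + 2 ^ T * of_bool (carry T x y t)"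
proof -
  have "v0 \<le> mid k b" "mid k b \<le> v1" "v1 \<le> 2 ^ T"
    using node_mid[OF node] node_le_top[OF node] by simp_all
  then have xy: "x < 2 ^ T" "y < 2 ^ T" "x + y = v1 - v0"
    using proper unfolding x_def y_def by linarith+
  define V where "V = {l. l \<le> t \<and> digit T (x + y) l}"
  define W where "W = {l \<in> V. \<not> (0 < l \<and> digit T x l \<noteq> digit T y l) \<and> t < carry_origin T x y l}"
  define h where "h = (\<lambda>(c, j). card (long_runs t k (b @ [c]) j (lo k b v0 c) (hi k b v1 c)) * 2 ^ (t - j))"
  have "finite V"
    by (rule finite_subset[of _ "{..t}"]) (auto simp: V_def)
  have "card (long_runs t (Suc k) b l v0 v1) * 2 ^ (t - l) \<le>
      (\<Sum>p\<in>next_nodes T t x y l. h p) + of_bool (l \<in> W) * 2 ^ T" if "l \<in> V" for l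
    using card_long_runs_Suc_le[OF node proper, of l t] that \<open>t < T\<close> xy(3)
    by (simp add: V_def W_def h_def x_def y_def)
  then have "long_runs_weight t (Suc k) b v0 v1 \<le>
      (\<Sum>l\<in>V. \<Sum>p\<in>next_nodes T t x y l. h p) + (\<Sum>l\<in>V. of_bool (l \<in> W) * 2 ^ T)"
    unfolding long_runs_weight_def xy(3)[symmetric] V_def[symmetric]
    by (simp add: sum_mono flip: sum.distrib)
  also have "(\<Sum>l\<in>V. \<Sum>p\<in>next_nodes T t x y l. h p) \<le>
      long_runs_weight t k (b @ [False]) v0 (mid k b) + long_runs_weight t k (b @ [True]) (mid k b) v1"
    using sum_next_nodes_le[OF xy(1,2), where t = t and h = h]
    by (simp add: V_def h_def long_runs_weight_def x_def y_def)
  also have "(\<Sum>l\<in>V. of_bool (l \<in> W) * 2 ^ T) = card W * 2 ^ T"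
    by (simp add: W_def sum.If_cases \<open>finite V\<close> Int_def)
  also have "card W \<le> of_bool (carry T x y t)"
  proof -
    have "W = {l. l \<le> t \<and> digit T (x + y) l \<and> \<not> (0 < l \<and> digit T x l \<noteq> digit T y l)
        \<and> t < carry_origin T x y l}"
      by (auto simp: W_def V_def)
    then show ?thesis
      using card_pending_carries[OF xy(1,2)] by simp
  qed
  finally show ?thesis
    by (simp add: mult.commute)
qed

lemma long_runs_weight_le_carries:
  assumes "node k b v0 v1" "t < T"
  shows "long_runs_weight t k b v0 v1 \<le> 2 ^ T * carries t k b v0 v1"
  using assms(1)
proof (induction k arbitrary: b v0 v1)
  case 0
  then show ?case
    by (simp add: long_runs_weight_def long_runs_def)
next
  case (Suc k)
  have IH: "long_runs_weight t k (b @ [c]) (lo k b v0 c) (hi k b v1 c)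
      \<le> 2 ^ T * carries t k (b @ [c]) (lo k b v0 c) (hi k b v1 c)" for c
    using Suc.IH[OF node_child[OF Suc.prems]] .
  show ?case
  proof (cases "mid k b = v1 \<or> mid k b = v0")
    case True
    define c where "c = (mid k b \<noteq> v1)"
    have "long_runs_weight t (Suc k) b v0 v1 = long_runs_weight t k (b @ [c]) (lo k b v0 c) (hi k b v1 c)"
      using long_runs_weight_Suc_degenerate[OF Suc.prems True] unfolding c_def .
    also have "\<dots> \<le> 2 ^ T * carries t k (b @ [c]) (lo k b v0 c) (hi k b v1 c)"
      by (rule IH)
    also have "\<dots> \<le> 2 ^ T * carries t (Suc k) b v0 v1"
      by (cases c) simp_all
    finally show ?thesis .
  next
    case False
    then show ?thesis
      using long_runs_weight_Suc_le[OF Suc.prems _ _ assms(2)] IH[of False] IH[of True]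
      by (simp add: algebra_simps)
  qed
qed

text \<open>Every carry into digit \<open>t\<close> consumes \<open>2 ^ (T - t)\<close> of the length of the interval,
  clipped at \<open>2 ^ (m + T - t)\<close>, above which the interval endpoints are multiples of
  \<open>2 ^ (T - t)\<close> and no carries into digit \<open>t\<close> arise.\<close>

lemma carries_bound:
  assumes "node k b v0 v1" "t \<le> T"
  shows "carries t k b v0 v1 * 2 ^ (T - t) + (v1 - v0) mod 2 ^ (T - t)
    \<le> min v1 (2 ^ (m + (T - t))) - min v0 (2 ^ (m + (T - t)))"
  using assms(1)
proof (induction k arbitrary: b v0 v1)
  case 0
  then show ?case
    using diff_mod_le_clipped[OF node_le node_mantissa[THEN conjunct1] node_mantissa[THEN conjunct2]]
    by simp
next
  case (Suc k)
  define s where "s = mid k b"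
  define M :: nat where "M = 2 ^ (T - t)"
  define B :: nat where "B = 2 ^ (m + (T - t))"
  have "v0 \<le> s" "s \<le> v1"
    using node_mid[OF Suc.prems] by (simp_all add: s_def)
  have IH: "carries t k (b @ [c]) (lo k b v0 c) (hi k b v1 c) * M + (hi k b v1 c - lo k b v0 c) mod M
      \<le> min (hi k b v1 c) B - min (lo k b v0 c) B" for c
    using Suc.IH[OF node_child[OF Suc.prems]] by (simp add: M_def B_def)
  have "(s - v0) mod M + (v1 - s) mod M = (v1 - v0) mod M + M * of_bool (carry T (s - v0) (v1 - s) t)"
    using add_mod_mod[of "s - v0" M "v1 - s"] \<open>v0 \<le> s\<close> \<open>s \<le> v1\<close> by (simp add: M_def carry_def)
  then have "carries t (Suc k) b v0 v1 * M + (v1 - v0) mod M =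
      (carries t k (b @ [False]) v0 s * M + (s - v0) mod M) + (carries t k (b @ [True]) s v1 * M + (v1 - s) mod M)"
    by (simp add: s_def algebra_simps)
  also have "\<dots> \<le> (min s B - min v0 B) + (min v1 B - min s B)"
    using IH[of False] IH[of True] by (simp add: s_def)
  also have "\<dots> = min v1 B - min v0 B"
    using \<open>v0 \<le> s\<close> \<open>s \<le> v1\<close> by simp
  finally show ?case
    by (simp add: M_def B_def)
qed

lemma card_long_runs_le: "card (long_runs t k b l v0 v1) \<le> 2 ^ T"
proof -
  have "card (long_runs t k b l v0 v1) \<le> card (Pow {..<T})"
    by (rule card_mono) (auto simp: long_runs_def)
  then show ?thesis
    by (simp add: card_Pow)
qed

lemma card_long_runs_root:
  assumes "t < T"
  shows "card (long_runs t n [] 0 0 (2 ^ T)) * 2 ^ t \<le> 2 ^ T * 2 ^ m"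
proof -
  have "{l. l \<le> t \<and> digit T (2 ^ T - 0) l} = {0}"
    by (auto simp: digit_pow2_self)
  then have "card (long_runs t n [] 0 0 (2 ^ T)) * 2 ^ t \<le> 2 ^ T * carries t n [] 0 (2 ^ T)"
    using long_runs_weight_le_carries[OF node_root assms] by (simp add: long_runs_weight_def)
  moreover have "carries t n [] 0 (2 ^ T) \<le> 2 ^ m"
  proof -
    have "(2::nat) ^ (T - t) dvd 2 ^ T"
      by (simp add: le_imp_power_dvd)
    then have "carries t n [] 0 (2 ^ T) * 2 ^ (T - t) \<le> min (2 ^ T) (2 ^ (m + (T - t)))"
      using carries_bound[OF node_root, of t] assms by simp
    also have "\<dots> \<le> 2 ^ m * 2 ^ (T - t)"
      by (simp add: power_add)
    finally show ?thesis
      by simp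
  qed
  ultimately show ?thesis
    by (meson le_trans mult_le_mono2)
qed

lemma nn_integral_opt_bits_root:
  "(\<integral>\<^sup>+\<omega>. ennreal_of_enat (opt_bits \<phi> F \<omega> n [] 0 0 1) \<partial>coins)
    = ennreal (real (\<Sum>t<T. card (long_runs t n [] 0 0 (2 ^ T))) / 2 ^ T)"
proof -
  define L where "L \<omega> = opt \<omega> n [] 0 0 (2 ^ T)" for \<omega>
  have "digit T (2 ^ T - 0) 0"
    by (simp add: digit_pow2_self)
  then have L_le: "L \<omega> \<le> enat T" for \<omega>
    unfolding L_def by (rule opt_le_T[OF node_root])
  have prefix: "L \<omega>' = L \<omega>" if "\<And>i. i < T \<Longrightarrow> \<omega>' i = \<omega> i" for \<omega> \<omega>'
    unfolding L_def using \<open>digit T (2 ^ T - 0) 0\<close> that by (rule opt_prefix_cong[OF node_root])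
  define e where "e S = the_enat (L (\<lambda>i. i \<in> S))" for S
  have e: "L (\<lambda>i. i \<in> S) = enat (e S)" "e S \<le> T" for S
    using L_le[of "\<lambda>i. i \<in> S"] by (cases "L (\<lambda>i. i \<in> S)"; simp add: e_def)+
  define N where "N = (\<Sum>t<T. card (long_runs t n [] 0 0 (2 ^ T)))"
  have "{S \<in> Pow {..<T}. t < e S} = long_runs t n [] 0 0 (2 ^ T)" for t
    unfolding long_runs_def L_def[symmetric] by (simp add: e(1))
  then have "(\<Sum>S\<in>Pow {..<T}. e S) = N"
    unfolding N_def by (subst sum_eq_sum_card_less[of _ e T]) (simp_all add: e(2))
  have "(\<integral>\<^sup>+\<omega>. ennreal_of_enat (opt_bits \<phi> F \<omega> n [] 0 0 1) \<partial>coins) = (\<integral>\<^sup>+\<omega>. ennreal_of_enat (L \<omega>) \<partial>coins)"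
    by (simp add: L_def)
  also have "\<dots> = (\<Sum>S\<in>Pow {..<T}. ennreal_of_enat (L (\<lambda>i. i \<in> S))) * ennreal ((1 / 2) ^ T)"
    by (rule nn_integral_coins_prefix, rule arg_cong[where f = ennreal_of_enat], rule prefix)
  also have "(\<Sum>S\<in>Pow {..<T}. ennreal_of_enat (L (\<lambda>i. i \<in> S))) = (\<Sum>S\<in>Pow {..<T}. of_nat (e S))"
    by (simp add: e(1))
  also have "\<dots> = of_nat (\<Sum>S\<in>Pow {..<T}. e S)"
    by (rule of_nat_sum[symmetric])
  also have "\<dots> = ennreal (real N)"
    by (simp add: \<open>(\<Sum>S\<in>Pow {..<T}. e S) = N\<close> ennreal_of_nat_eq_real_of_nat)
  also have "ennreal (real N) * ennreal ((1 / 2) ^ T) = ennreal (real N * (1 / 2) ^ T)"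
    by (rule ennreal_mult''[symmetric]) simp
  also have "real N * (1 / 2) ^ T = real N / 2 ^ T"
    by (simp add: power_one_over)
  finally show ?thesis
    by (simp add: N_def)
qed

lemma nn_integral_opt_bits_le:
  assumes "m \<le> T"
  shows "(\<integral>\<^sup>+\<omega>. ennreal_of_enat (opt_bits \<phi> F \<omega> n [] 0 0 1) \<partial>coins)
    \<le> ennreal (real m + 2 - 2 ^ (m + 1) / 2 ^ T)"
proof -
  have bound: "real (card (long_runs t n [] 0 0 (2 ^ T))) / 2 ^ T \<le> min 1 (2 ^ m / 2 ^ t)" if "t < T" for t
  proof -
    have "real (card (long_runs t n [] 0 0 (2 ^ T))) \<le> 2 ^ T"
      using card_long_runs_le[of t n "[]" 0 0 "2 ^ T"] by (simp flip: of_nat_le_iff)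
    moreover have "real (card (long_runs t n [] 0 0 (2 ^ T)) * 2 ^ t) \<le> real (2 ^ T * 2 ^ m)"
      using card_long_runs_root[OF that] by (rule of_nat_mono)
    then have "real (card (long_runs t n [] 0 0 (2 ^ T))) * 2 ^ t \<le> 2 ^ T * 2 ^ m"
      by simp
    ultimately show ?thesis
      by (simp add: field_simps)
  qed
  have "real (\<Sum>t<T. card (long_runs t n [] 0 0 (2 ^ T))) / 2 ^ T
      = (\<Sum>t<T. real (card (long_runs t n [] 0 0 (2 ^ T))) / 2 ^ T)"
    by (simp add: sum_divide_distrib)
  also have "\<dots> \<le> (\<Sum>t<T. min 1 (2 ^ m / 2 ^ t))"
    by (rule sum_mono, rule bound) simp
  also have "\<dots> = real m + 2 - 2 ^ (m + 1) / 2 ^ T"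
    using sum_min_one_pow2[of m "T - m"] assms by simp
  finally show ?thesis
    unfolding nn_integral_opt_bits_root by (rule ennreal_leI)
qed

end

section \<open>Floating-point CDFs\<close>

lemma mantissa_bounded_subnormal:
  assumes "f < 2 ^ m"
  shows "mantissa_bounded m T f"
  unfolding mantissa_bounded_def
proof (intro allI impI)
  fix r
  have "(2::nat) ^ m \<le> 2 ^ (m + r)"
    by (rule power_increasing) auto
  then show "f < 2 ^ (m + r)"
    using assms by linarith
qed

lemma mantissa_bounded_normal:
  assumes "f < 2 ^ m" "1 \<le> e"
  shows "mantissa_bounded m T ((2 ^ m + f) * 2 ^ (e - 1))"
  unfolding mantissa_bounded_def
proof (intro allI impI)
  fix r
  obtain d where e: "e = Suc d"
    using assms(2) by (cases e) auto
  assume "\<not> 2 ^ r dvd (2 ^ m + f) * 2 ^ (e - 1)"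
  then have "\<not> r \<le> d"
    using le_imp_power_dvd[of r d "2::nat"] by (auto simp: e)
  have "(2 ^ m + f) * 2 ^ d < 2 ^ Suc m * 2 ^ d"
    using assms(1) by simp
  also have "\<dots> = 2 ^ (Suc m + d)"
    by (simp only: power_add)
  also have "\<dots> \<le> 2 ^ (m + r)"
    using \<open>\<not> r \<le> d\<close> by (intro power_increasing) auto
  finally show "(2 ^ m + f) * 2 ^ (e - 1) < 2 ^ (m + r)"
    by (simp add: e)
qed

lemma powr_exponent_scaled:
  assumes "E \<ge> 2" "1 \<le> e"
  shows "2 powr real_of_int (int e - fp_bias E) = 2 ^ (m + (e - 1)) / 2 ^ (m + 2 ^ (E - 1) - 2)"
proof -
  have "(2::nat) \<le> 2 ^ (E - 1)"
    using power_increasing[of 1 "E - 1" "2::nat"] assms(1) by simp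
  define A where "A = m + (e - 1)"
  define B where "B = m + 2 ^ (E - 1) - 2"
  have "real_of_int (int e - fp_bias E) = real A - real B"
    using assms(2) \<open>2 \<le> 2 ^ (E - 1)\<close> by (simp add: A_def B_def fp_bias_def of_nat_diff)
  then have "2 powr real_of_int (int e - fp_bias E) = 2 powr real A / 2 powr real B"
    by (simp add: powr_diff)
  then show ?thesis
    unfolding A_def B_def by (simp only: powr_realpow zero_less_numeral)
qed

text \<open>With bias \<open>2 ^ (E - 1) - 1\<close>, every number of \<open>fp_unit E m\<close> is an integer multiple of
  the smallest positive subnormal \<open>2 ^ (- T)\<close>, \<open>T = m + 2 ^ (E - 1) - 2\<close>.\<close>

lemma fp_unit_scaled:
  assumes "E \<ge> 2" "x \<in> fp_unit E m"
  defines "T \<equiv> m + 2 ^ (E - 1) - 2"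
  shows "\<exists>V. x = real V / 2 ^ T \<and> mantissa_bounded m T V"
proof -
  have "x \<in> fp_nonneg E m"
    using assms(2) by (simp add: fp_unit_def)
  then consider (subnormal) f where "f < (2::nat) ^ m" "x = real f / 2 ^ m * 2 powr real_of_int (1 - fp_bias E)"
    | (normal) e f where "1 \<le> e" "f < (2::nat) ^ m" "x = (1 + real f / 2 ^ m) * 2 powr real_of_int (int e - fp_bias E)"
    unfolding fp_nonneg_def by blast
  then show ?thesis
  proof cases
    case subnormal
    have "2 powr real_of_int (1 - fp_bias E) = 2 ^ m / 2 ^ T"
      using powr_exponent_scaled[OF assms(1), of 1 m] by (simp add: T_def)
    then have "x = real f / 2 ^ T"
      using subnormal(2) by simp
    then show ?thesis
      using mantissa_bounded_subnormal[OF subnormal(1)] by blast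
  next
    case normal
    have "2 powr real_of_int (int e - fp_bias E) = 2 ^ (m + (e - 1)) / 2 ^ T"
      using powr_exponent_scaled[OF assms(1) normal(1), of m] by (simp add: T_def)
    then have "x = (1 + real f / 2 ^ m) * (2 ^ (m + (e - 1)) / 2 ^ T)"
      using normal(3) by simp
    also have "\<dots> = real ((2 ^ m + f) * 2 ^ (e - 1)) / 2 ^ T"
      by (simp add: power_add field_simps)
    finally have "x = real ((2 ^ m + f) * 2 ^ (e - 1)) / 2 ^ T" .
    then show ?thesis
      using mantissa_bounded_normal[OF normal(2,1)] by blast
  qed
qed

lemma scaled_cdf_of_fp_cdf:
  assumes "E \<ge> 2" "binary_number_format n \<gamma> \<phi>" "fp_cdf E m n \<phi> F"
  shows "\<exists>G. scaled_cdf \<phi> F n (m + 2 ^ (E - 1) - 2) m G"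
proof -
  define T where "T = m + 2 ^ (E - 1) - 2"
  have bij: "bij_betw \<phi> (bitstrings n) (bitstrings n)"
    using assms(2) by (simp add: binary_number_format_def)
  have \<phi>: "\<phi> c \<in> bitstrings n" if "length c = n" for c
    using bij that by (auto simp: bij_betw_def bitstrings_def)
  define G where "G c = (SOME V. F (\<phi> c) = real V / 2 ^ T \<and> mantissa_bounded m T V)" for c
  have G: "F (\<phi> c) = real (G c) / 2 ^ T \<and> mantissa_bounded m T (G c)" if "length c = n" for c
    unfolding G_def T_def
    by (rule someI_ex, rule fp_unit_scaled[OF assms(1)]) (use assms(3) \<phi>[OF that] in \<open>simp add: fp_cdf_def\<close>)
  have "G c \<le> G c'" if "length c = n" "length c' = n" "dict_less c c'" for c c'
  proof -
    have "c \<in> bitstrings n" "c' \<in> bitstrings n"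
      using that by (simp_all add: bitstrings_def)
    then have "fmt_less n \<phi> (\<phi> c) (\<phi> c')"
      using that(3) bij_betw_imp_inj_on[OF bij] by (simp add: fmt_less_def)
    then have "F (\<phi> c) \<le> F (\<phi> c')"
      using assms(3) \<phi> that(1,2) by (simp add: fp_cdf_def)
    then have "real (G c) / 2 ^ T \<le> real (G c') / 2 ^ T"
      using G that(1,2) by simp
    then show ?thesis
      by (simp add: divide_le_cancel)
  qed
  moreover have "G (replicate n True) = 2 ^ T"
  proof -
    have "real (G (replicate n True)) / 2 ^ T = 1"
      using G[of "replicate n True"] assms(3) by (simp add: fp_cdf_def)
    then have "real (G (replicate n True)) = real (2 ^ T)"
      by (simp add: field_simps)
    then show ?thesis
      by (simp only: of_nat_eq_iff)
  qed
  ultimately have "scaled_cdf \<phi> F n T m G"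
    using G by unfold_locales auto
  then show ?thesis
    unfolding T_def by blast
qed

theorem theorem5p18:
  fixes E m n :: nat
    and \<gamma> :: "bool list \<Rightarrow> xreal"
    and \<phi> :: "bool list \<Rightarrow> bool list"
    and F :: "bool list \<Rightarrow> real"
  assumes "E \<ge> 2"
    and "binary_number_format n \<gamma> \<phi>"
    and "fp_cdf E m n \<phi> F"
  shows "expected_bits n \<phi> F \<le> ennreal (real m + 2 - 2 powr (3 - 2 ^ (E - 1)))"
proof -
  define T where "T = m + 2 ^ (E - 1) - 2"
  have "(2::nat) \<le> 2 ^ (E - 1)"
    using power_increasing[of 1 "E - 1" "2::nat"] assms(1) by simp
  then have "m \<le> T" and exponent: "real (m + 1) - real T = 3 - 2 ^ (E - 1)"
    by (simp_all add: T_def of_nat_diff)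
  obtain G where "scaled_cdf \<phi> F n T m G"
    using scaled_cdf_of_fp_cdf[OF assms] unfolding T_def by blast
  then have "expected_bits n \<phi> F \<le> ennreal (real m + 2 - 2 ^ (m + 1) / 2 ^ T)"
    unfolding expected_bits_def using \<open>m \<le> T\<close> by (rule scaled_cdf.nn_integral_opt_bits_le)
  moreover have "(2::real) ^ (m + 1) / 2 ^ T = 2 powr (3 - 2 ^ (E - 1))"
    using exponent by (metis powr_diff powr_realpow zero_less_numeral)
  ultimately show ?thesis
    by simp
qed

end
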